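(* Let $\{G_i\}$ be a family of connected graphs with common induced subgraph $J$, embedded as $J_i\subseteq G_i$, such that $\{(G_i|J_i)\}$ is isometric, and let $H=\amalg\{(G_i|J_i)\}$. Let $uv\in Solv(J_i:G_i)$ with $d(u,J)<d(v,J)$, and let $c\in V(J)$ with $d(u,c)=d(u,J)$. Then $c$ distinguishes $uv$. Moreover, if for some $j\neq i$ there exists $s\in V(G_j)$ with $d(s,c)=d(s,J)$, then $s$ distinguishes $uv$.
   Context: All distances $d$ are shortest-path distances in $H$, and $d(x,J)=\min_{w\in V(J)}d(x,w)$. A vertex $w$ distinguishes an edge $uv$ if $d(w,u)\neq d(w,v)$. $J$ is a common induced subgraph of each $G_i$ via injective maps $\iota_i:V(J)\to V(G_i)$ with $\iota_i(x)\iota_i(y)\in E(G_i)$ iff $xy\in E(J)$; $J_i$ is the induced image, $x^i=\iota_i(x)$. $H=\amalg\{(G_i|J_i)\}$ is obtained from the disjoint union of the $G_i$ by identifying, for each $x\in V(J)$, all $x^i$ into one vertex; $G_i$ and $J$ are regarded as subgraphs of $H$. The family is isometric if $d_{G_i}(a^i,b^i)=d_{G_j}(a^j,b^j)$ for all $i,j$, $a,b\in V(J)$. $Solv(J_i:G_i)$ is the set of edges $uv$ of $G_i$ with $d(u,J)\neq d(v,J)$. *)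

theory Defs
  imports "HOL-Library.Extended_Nat"
begin

definition simple_graph :: "'a set \<Rightarrow> ('a \<times> 'a) set \<Rightarrow> bool" where
  "simple_graph V E \<longleftrightarrow> E \<subseteq> V \<times> V \<and> sym E \<and> irrefl E"

definition connected_graph :: "'a set \<Rightarrow> ('a \<times> 'a) set \<Rightarrow> bool" where
  "connected_graph V E \<longleftrightarrow> simple_graph V E \<and> V \<noteq> {} \<and> (\<forall>x\<in>V. \<forall>y\<in>V. (x, y) \<in> E\<^sup>*)"

text \<open>Shortest-path distance (infinite if no path).\<close>
definition gdist :: "('a \<times> 'a) set \<Rightarrow> 'a \<Rightarrow> 'a \<Rightarrow> enat" where
  "gdist E x y = Inf (enat ` {n. (x, y) \<in> E ^^ n})"

definition common_induced_subgraph ::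
  "'i set \<Rightarrow> ('i \<Rightarrow> 'v set) \<Rightarrow> ('i \<Rightarrow> ('v \<times> 'v) set) \<Rightarrow> 'j set \<Rightarrow> ('j \<times> 'j) set
   \<Rightarrow> ('i \<Rightarrow> 'j \<Rightarrow> 'v) \<Rightarrow> bool" where
  "common_induced_subgraph I V E VJ EJ \<iota> \<longleftrightarrow>
     simple_graph VJ EJ \<and>
     (\<forall>i\<in>I. simple_graph (V i) (E i) \<and> inj_on (\<iota> i) VJ \<and> \<iota> i ` VJ \<subseteq> V i \<and>
        (\<forall>x\<in>VJ. \<forall>y\<in>VJ. (\<iota> i x, \<iota> i y) \<in> E i \<longleftrightarrow> (x, y) \<in> EJ))"

definition isometric_family ::
  "'i set \<Rightarrow> ('i \<Rightarrow> ('v \<times> 'v) set) \<Rightarrow> 'j set \<Rightarrow> ('i \<Rightarrow> 'j \<Rightarrow> 'v) \<Rightarrow> bool" where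
  "isometric_family I E VJ \<iota> \<longleftrightarrow>
     (\<forall>i\<in>I. \<forall>j\<in>I. \<forall>a\<in>VJ. \<forall>b\<in>VJ.
        gdist (E i) (\<iota> i a) (\<iota> i b) = gdist (E j) (\<iota> j a) (\<iota> j b))"

text \<open>The amalgamation H: vertices of J are represented by Inl x; every other vertex v of G_i
  by Inr (i, v).  amal_vert maps a vertex of G_i to the corresponding vertex of H.\<close>
definition amal_vert :: "'j set \<Rightarrow> ('i \<Rightarrow> 'j \<Rightarrow> 'v) \<Rightarrow> 'i \<Rightarrow> 'v \<Rightarrow> 'j + ('i \<times> 'v)" where
  "amal_vert VJ \<iota> i v = (if v \<in> \<iota> i ` VJ then Inl (the_inv_into VJ (\<iota> i) v) else Inr (i, v))"

definition amal_verts ::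
  "'i set \<Rightarrow> ('i \<Rightarrow> 'v set) \<Rightarrow> 'j set \<Rightarrow> ('i \<Rightarrow> 'j \<Rightarrow> 'v) \<Rightarrow> ('j + ('i \<times> 'v)) set" where
  "amal_verts I V VJ \<iota> = (\<Union>i\<in>I. amal_vert VJ \<iota> i ` V i)"

definition amal_edges ::
  "'i set \<Rightarrow> ('i \<Rightarrow> ('v \<times> 'v) set) \<Rightarrow> 'j set \<Rightarrow> ('i \<Rightarrow> 'j \<Rightarrow> 'v)
   \<Rightarrow> (('j + ('i \<times> 'v)) \<times> ('j + ('i \<times> 'v))) set" where
  "amal_edges I E VJ \<iota> =
     {(amal_vert VJ \<iota> i a, amal_vert VJ \<iota> i b) | i a b. i \<in> I \<and> (a, b) \<in> E i}"

definition dist_to_J ::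
  "(('j + ('i \<times> 'v)) \<times> ('j + ('i \<times> 'v))) set \<Rightarrow> 'j set \<Rightarrow> 'j + ('i \<times> 'v) \<Rightarrow> enat" where
  "dist_to_J EH VJ x = (INF w\<in>VJ. gdist EH x (Inl w))"

end

theory Submission
  imports Defs
begin

text \<open>The vertices of J separate the private part of G_i from the rest of H: every walk in H
  entering G_i from outside passes through some vertex w of J, so such a walk from x to y has
  length at least d(x,J) + d(y,J).  Now d(c,u) = d(u,J) < d(v,J) \<le> d(c,v).  If moreover
  d(s,c) = d(s,J) for s in another G_j, then
  d(s,u) \<le> d(s,J) + d(u,J) < d(s,J) + d(v,J) \<le> d(s,v),
  where finiteness of d(s,J) comes from the connectedness of G_j.\<close>

lemma sym_relpow:
  assumes "sym R" shows "sym (R ^^ n)"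
proof (induction n)
  case 0 then show ?case by (simp add: sym_Id)
next
  case (Suc n)
  show ?case
  proof (rule symI)
    fix x y assume "(x, y) \<in> R ^^ Suc n"
    then obtain z where "(x, z) \<in> R" "(z, y) \<in> R ^^ n" using relpow_Suc_D2 by metis
    then have "(y, z) \<in> R ^^ n" "(z, x) \<in> R" using Suc.IH assms by (auto dest: symD)
    then show "(y, x) \<in> R ^^ Suc n" by auto
  qed
qed

lemma gdist_le: "(x, y) \<in> E ^^ n \<Longrightarrow> gdist E x y \<le> enat n"
  unfolding gdist_def by (auto intro: Inf_lower)

lemma gdist_self: "gdist E x x = 0"
proof -
  have "gdist E x x \<le> enat 0" by (rule gdist_le) simp
  then show ?thesis by (simp add: zero_enat_def[symmetric])
qed

lemma gdist_attained:
  assumes "gdist E x y \<noteq> \<infinity>"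
  obtains n where "(x, y) \<in> E ^^ n" "gdist E x y = enat n"
proof -
  let ?A = "enat ` {n. (x, y) \<in> E ^^ n}"
  have "?A \<noteq> {}"
  proof
    assume "?A = {}"
    then show False using assms unfolding gdist_def by (simp add: top_enat_def)
  qed
  then have "Inf ?A \<in> ?A" unfolding Inf_enat_def by (auto intro: LeastI)
  then show thesis using that unfolding gdist_def by auto
qed

lemma gdist_sym: "sym E \<Longrightarrow> gdist E x y = gdist E y x"
  unfolding gdist_def using sym_relpow by (metis symD)

lemma gdist_triangle: "gdist E x z \<le> gdist E x y + gdist E y z"
proof (cases "gdist E x y = \<infinity> \<or> gdist E y z = \<infinity>")
  case True then show ?thesis by auto
next
  case False
  then obtain m n where "(x, y) \<in> E ^^ m" "gdist E x y = enat m"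
    and "(y, z) \<in> E ^^ n" "gdist E y z = enat n" by (metis gdist_attained)
  moreover from this have "(x, z) \<in> E ^^ (m + n)" by (auto simp: relpow_add)
  ultimately show ?thesis using gdist_le by fastforce
qed

lemma dist_to_J_le_gdist: "w \<in> VJ \<Longrightarrow> dist_to_J EH VJ x \<le> gdist EH x (Inl w)"
  unfolding dist_to_J_def by (rule INF_lower)

lemma amal_vert_Inl_iff:
  assumes "inj_on (\<iota> k) VJ"
  shows "amal_vert VJ \<iota> k a = Inl w \<longleftrightarrow> w \<in> VJ \<and> a = \<iota> k w"
  using assms unfolding amal_vert_def
  by (auto simp: the_inv_into_f_f f_the_inv_into_f intro: the_inv_into_into)

lemma amal_vert_Inr: "amal_vert VJ \<iota> k a = Inr (k', b) \<Longrightarrow> k' = k \<and> b = a"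
  unfolding amal_vert_def by (auto split: if_splits)

lemma sym_amal_edges:
  assumes "\<forall>k\<in>I. sym (E k)"
  shows "sym (amal_edges I E VJ \<iota>)"
  using assms unfolding amal_edges_def by (fastforce intro!: symI dest: symD)

lemma amal_edges_relpow:
  assumes "k \<in> I" "(a, b) \<in> E k ^^ n"
  shows "(amal_vert VJ \<iota> k a, amal_vert VJ \<iota> k b) \<in> amal_edges I E VJ \<iota> ^^ n"
  using assms(2)
proof (induction n arbitrary: b)
  case (Suc n)
  then obtain z where "(a, z) \<in> E k ^^ n" "(z, b) \<in> E k" by auto
  with Suc.IH assms(1) show ?case unfolding amal_edges_def by auto
qed simp

lemma gdist_amal_vert_finite:
  assumes "k \<in> I" "connected_graph (V k) (E k)" "a \<in> V k" "b \<in> V k"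
  shows "gdist (amal_edges I E VJ \<iota>) (amal_vert VJ \<iota> k a) (amal_vert VJ \<iota> k b) \<noteq> \<infinity>"
proof -
  have "(a, b) \<in> (E k)\<^sup>*" using assms(2-4) unfolding connected_graph_def by blast
  then obtain n where "(a, b) \<in> E k ^^ n" using rtrancl_power by blast
  then have "gdist (amal_edges I E VJ \<iota>) (amal_vert VJ \<iota> k a) (amal_vert VJ \<iota> k b) \<le> enat n"
    by (intro gdist_le amal_edges_relpow assms(1))
  then show ?thesis by (auto dest: enat_ile)
qed

lemma amal_edge_Inl:
  assumes "\<forall>k\<in>I. inj_on (\<iota> k) VJ" "(Inl w, z) \<in> amal_edges I E VJ \<iota>"
  shows "w \<in> VJ"
  using assms unfolding amal_edges_def by (auto dest!: sym[of "Inl w"] simp: amal_vert_Inl_iff)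

lemma amal_edge_into_Inr:
  "(z, Inr (k, b)) \<in> amal_edges I E VJ \<iota> \<Longrightarrow> z = Inr (k', a) \<Longrightarrow> k' = k"
  unfolding amal_edges_def by (auto dest!: sym[of "Inr _"] amal_vert_Inr)

lemma amal_walk_through_J:
  assumes inj: "\<forall>k\<in>I. inj_on (\<iota> k) VJ"
    and walk: "(x, Inr (k, b)) \<in> amal_edges I E VJ \<iota> ^^ n"
    and outside: "\<forall>a. x \<noteq> Inr (k, a)"
  shows "\<exists>w\<in>VJ. \<exists>m1 m2. n = m1 + m2 \<and> (x, Inl w) \<in> amal_edges I E VJ \<iota> ^^ m1
           \<and> (Inl w, Inr (k, b)) \<in> amal_edges I E VJ \<iota> ^^ m2"
  using walk
proof (induction n arbitrary: b)
  case 0 then show ?case using outside by simp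
next
  case (Suc n)
  let ?EH = "amal_edges I E VJ \<iota>"
  obtain z where xz: "(x, z) \<in> ?EH ^^ n" and zy: "(z, Inr (k, b)) \<in> ?EH"
    using Suc.prems by auto
  show ?case
  proof (cases z)
    case (Inl w)
    have "w \<in> VJ" using amal_edge_Inl[OF inj] zy Inl by blast
    then show ?thesis using xz zy Inl
      by (intro bexI[of _ w] exI[of _ n] exI[of _ "Suc 0"]) auto
  next
    case (Inr p)
    obtain a where z: "z = Inr (k, a)"
      using amal_edge_into_Inr[OF zy] Inr by (cases p) simp
    then obtain w m1 m2 where "w \<in> VJ" "n = m1 + m2" "(x, Inl w) \<in> ?EH ^^ m1"
        "(Inl w, z) \<in> ?EH ^^ m2"
      using Suc.IH[OF xz[unfolded z]] by blast
    then show ?thesis using zy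
      by (intro bexI[of _ w] exI[of _ m1] exI[of _ "Suc m2"]) auto
  qed
qed

lemma dist_to_J_add_le_gdist:
  fixes I E VJ \<iota>
  defines "EH \<equiv> amal_edges I E VJ \<iota>"
  assumes inj: "\<forall>k\<in>I. inj_on (\<iota> k) VJ" and sym: "\<forall>k\<in>I. sym (E k)"
    and outside: "\<forall>a. x \<noteq> Inr (k, a)"
  shows "dist_to_J EH VJ x + dist_to_J EH VJ (Inr (k, b)) \<le> gdist EH x (Inr (k, b))"
proof (cases "gdist EH x (Inr (k, b)) = \<infinity>")
  case False
  then obtain n where n: "(x, Inr (k, b)) \<in> EH ^^ n" "gdist EH x (Inr (k, b)) = enat n"
    by (rule gdist_attained)
  then obtain w m1 m2 where w: "w \<in> VJ" "n = m1 + m2" "(x, Inl w) \<in> EH ^^ m1"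
      "(Inl w, Inr (k, b)) \<in> EH ^^ m2"
    using amal_walk_through_J[OF inj _ outside] unfolding EH_def by blast
  have "(Inr (k, b), Inl w) \<in> EH ^^ m2"
    using sym_relpow[OF sym_amal_edges[OF sym]] w(4) unfolding EH_def by (rule symD)
  then have "gdist EH (Inr (k, b)) (Inl w) \<le> enat m2" by (rule gdist_le)
  then have "dist_to_J EH VJ (Inr (k, b)) \<le> enat m2"
    by (rule order_trans[OF dist_to_J_le_gdist[OF w(1)]])
  moreover have "dist_to_J EH VJ x \<le> enat m1"
    using dist_to_J_le_gdist[OF w(1)] gdist_le[OF w(3)] by (rule order_trans)
  ultimately have "dist_to_J EH VJ x + dist_to_J EH VJ (Inr (k, b)) \<le> enat m1 + enat m2"
    by (intro add_mono)
  then show ?thesis using n(2) w(2) by simp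
qed simp

lemma amal_vert_eq_Inr_if_dist_to_J_nonzero:
  assumes "inj_on (\<iota> k) VJ" "dist_to_J EH VJ (amal_vert VJ \<iota> k a) \<noteq> 0"
  shows "amal_vert VJ \<iota> k a = Inr (k, a)"
proof (cases "amal_vert VJ \<iota> k a")
  case (Inl w)
  then have "w \<in> VJ" using assms(1) by (simp add: amal_vert_Inl_iff)
  then have "dist_to_J EH VJ (Inl w) \<le> 0"
    using dist_to_J_le_gdist[of w VJ EH "Inl w"] by (simp add: gdist_self)
  then show ?thesis using assms(2) Inl by simp
next
  case (Inr p)
  then show ?thesis by (cases p) (auto dest: amal_vert_Inr)
qed

lemma gdist_less_across_J:
  fixes I E VJ \<iota>
  defines "EH \<equiv> amal_edges I E VJ \<iota>"
  assumes inj: "\<forall>k\<in>I. inj_on (\<iota> k) VJ" and sym: "\<forall>k\<in>I. sym (E k)"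
    and outside: "\<forall>a. x \<noteq> Inr (k, a)" and c: "c \<in> VJ"
    and xc: "gdist EH x (Inl c) = dist_to_J EH VJ x" "dist_to_J EH VJ x \<noteq> \<infinity>"
    and cy: "gdist EH (Inl c) y = dist_to_J EH VJ y"
    and less: "dist_to_J EH VJ y < dist_to_J EH VJ (Inr (k, b))"
  shows "gdist EH x y < gdist EH x (Inr (k, b))"
proof -
  have "gdist EH x y \<le> gdist EH x (Inl c) + gdist EH (Inl c) y"
    by (rule gdist_triangle)
  also have "\<dots> = dist_to_J EH VJ x + dist_to_J EH VJ y"
    using xc cy by simp
  also have "\<dots> < dist_to_J EH VJ x + dist_to_J EH VJ (Inr (k, b))"
    using xc(2) less by (simp add: enat_add_left_cancel_less)
  also have "\<dots> \<le> gdist EH x (Inr (k, b))"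
    unfolding EH_def by (rule dist_to_J_add_le_gdist[OF inj sym outside])
  finally show ?thesis .
qed

theorem lemma11:
  fixes I :: "'i set" and V :: "'i \<Rightarrow> 'v set" and E :: "'i \<Rightarrow> ('v \<times> 'v) set"
    and VJ :: "'j set" and EJ :: "('j \<times> 'j) set" and \<iota> :: "'i \<Rightarrow> 'j \<Rightarrow> 'v"
    and i :: 'i and u v :: 'v and c :: 'j
  defines "EH \<equiv> amal_edges I E VJ \<iota>"
    and "h \<equiv> amal_vert VJ \<iota>"
  assumes conn: "\<forall>k\<in>I. connected_graph (V k) (E k)"
    and cis: "common_induced_subgraph I V E VJ EJ \<iota>"
    and iso: "isometric_family I E VJ \<iota>"
    and i: "i \<in> I"
    and uv: "(u, v) \<in> E i"
    and less: "dist_to_J EH VJ (h i u) < dist_to_J EH VJ (h i v)"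
    and c: "c \<in> VJ"
    and cu: "gdist EH (h i u) (Inl c) = dist_to_J EH VJ (h i u)"
  shows "gdist EH (Inl c) (h i u) \<noteq> gdist EH (Inl c) (h i v)
    \<and> (\<forall>j\<in>I. \<forall>s\<in>V j. j \<noteq> i \<and> gdist EH (h j s) (Inl c) = dist_to_J EH VJ (h j s)
          \<longrightarrow> gdist EH (h j s) (h i u) \<noteq> gdist EH (h j s) (h i v))"
proof -
  have inj: "\<forall>k\<in>I. inj_on (\<iota> k) VJ" and sym: "\<forall>k\<in>I. sym (E k)"
    and J_in_V: "\<forall>k\<in>I. \<iota> k ` VJ \<subseteq> V k"
    using cis unfolding common_induced_subgraph_def simple_graph_def by auto
  have gdist_commute: "gdist EH x y = gdist EH y x" for x y
    unfolding EH_def by (rule gdist_sym[OF sym_amal_edges[OF sym]])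
  have cu': "gdist EH (Inl c) (h i u) = dist_to_J EH VJ (h i u)"
    using cu by (simp add: gdist_commute[of "Inl c"])
  have cv: "dist_to_J EH VJ (h i v) \<le> gdist EH (Inl c) (h i v)"
    using dist_to_J_le_gdist[OF c] by (simp add: gdist_commute[of "Inl c"])
  have hv: "h i v = Inr (i, v)"
    using less inj i unfolding h_def
    by (intro amal_vert_eq_Inr_if_dist_to_J_nonzero[where EH = EH]) auto
  have "gdist EH (h j s) (h i u) < gdist EH (h j s) (h i v)"
    if j: "j \<in> I" "s \<in> V j" "j \<noteq> i"
      and sc: "gdist EH (h j s) (Inl c) = dist_to_J EH VJ (h j s)" for j s
  proof -
    have "gdist EH (h j s) (h j (\<iota> j c)) \<noteq> \<infinity>"
      using conn J_in_V c j(1,2) unfolding EH_def h_def by (intro gdist_amal_vert_finite) auto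
    moreover have "h j (\<iota> j c) = Inl c"
      using inj j(1) c unfolding h_def by (simp add: amal_vert_Inl_iff)
    moreover have "\<forall>a. h j s \<noteq> Inr (i, a)"
      using j(3) unfolding h_def by (auto dest: amal_vert_Inr)
    ultimately show ?thesis
      using sc cu' less c inj sym unfolding hv EH_def by (intro gdist_less_across_J) auto
  qed
  moreover have "gdist EH (Inl c) (h i u) \<noteq> gdist EH (Inl c) (h i v)"
    using cu' cv less by (metis leD)
  ultimately show ?thesis by (metis order.strict_implies_not_eq)
qed

end
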